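(* Let $d\ge3$, $h\ge1$, $1\le n\le h$, and let $j_1\ne j_2$ be two vertices at distance $n$ from the root that have the same parent. Then the order of $\bar{\mathbf{x}}_{j_1}-\bar{\mathbf{x}}_{j_2}$ in $G(d,h)$ is $\theta(d,h+2-n)$, where $\theta(d,m):=\frac{(d-1)^m-1}{d-2}$.
   Context: Let $\mathcal{T}(d,h)$ be the rooted tree in which the root $0$ has $d$ children, every vertex at distance $1,\dots,h-1$ from the root has $d-1$ children, and the vertices at distance $h$ are leaves. Let $V$ be its vertex set, $A$ its adjacency matrix, $\Delta := dI-A$, and $\Lambda\subset\mathbb{Z}^V$ the lattice spanned by the rows of $\Delta$. Then $G(d,h):=\mathbb{Z}^V/\Lambda$; $\{\mathbf{x}_i:i\in V\}$ is the standard basis of $\mathbb{Z}^V$ and $\bar{\mathbf{v}}$ denotes the image of $\mathbf{v}\in\mathbb{Z}^V$ in $G(d,h)$. *)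

theory Defs
  imports Main
begin

text \<open>Vertices of T(d,h): a vertex is the list of child indices along the path from
the root (root = []).
The distance of a vertex from the root is its length; its parent is its butlast.\<close>

definition tree_V :: "nat \<Rightarrow> nat \<Rightarrow> nat list set" where
  "tree_V d h = {p. length p \<le> h \<and>
      (\<forall>i<length p. p ! i < (if i = 0 then d else d - 1))}"

definition tree_adj :: "nat list \<Rightarrow> nat list \<Rightarrow> bool" where
  "tree_adj u v \<longleftrightarrow> (u \<noteq> [] \<and> v = butlast u) \<or> (v \<noteq> [] \<and> u = butlast v)"

definition tree_Delta :: "nat \<Rightarrow> nat list \<Rightarrow> nat list \<Rightarrow> int" where
  "tree_Delta d i j = (if i = j then int d else 0) - (if tree_adj i j then 1 else 0)"

text \<open>Elements of Z^V are functions V \<Rightarrow> int, represented as functions vanishing off V.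
The lattice Lambda is the integer span of the rows of Delta.\<close>
definition tree_lattice :: "nat \<Rightarrow> nat \<Rightarrow> (nat list \<Rightarrow> int) set" where
  "tree_lattice d h = {w. \<exists>c :: nat list \<Rightarrow> int.
      w = (\<lambda>j. if j \<in> tree_V d h then (\<Sum>i\<in>tree_V d h. c i * tree_Delta d i j) else 0)}"

definition std_basis :: "nat list \<Rightarrow> nat list \<Rightarrow> int" where
  "std_basis i = (\<lambda>j. if j = i then 1 else 0)"

text \<open>Order of the class of v in G(d,h) = Z^V / Lambda: the least positive k with
k v in Lambda, and 0 if there is none (infinite order), as for group.ord.\<close>
definition order_in_G :: "nat \<Rightarrow> nat \<Rightarrow> (nat list \<Rightarrow> int) \<Rightarrow> nat" where
  "order_in_G d h v = (if \<exists>k::nat. 0 < k \<and> (\<lambda>j. int k * v j) \<in> tree_lattice d h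
     then (LEAST k::nat. 0 < k \<and> (\<lambda>j. int k * v j) \<in> tree_lattice d h) else 0)"

text \<open>theta(d,m) = ((d-1)^m - 1)/(d-2); the division is exact for d \<ge> 3.\<close>
definition theta :: "nat \<Rightarrow> nat \<Rightarrow> nat" where
  "theta d m = ((d - 1) ^ m - 1) div (d - 2)"

end

theory Submission
  imports Defs "HOL-Library.Sublist"
begin

text \<open>
  The lattice \<open>\<Lambda>\<close> consists of the row combinations \<open>c\<Delta>\<close>, so the order of \<open>v\<close> is the least
  \<open>k > 0\<close> for which \<open>c\<Delta> = k v\<close> has an integral solution \<open>c\<close>.  For \<open>d \<ge> 2\<close> the map
  \<open>c \<mapsto> c\<Delta>\<close> is injective: at a deepest vertex where \<open>|c|\<close> is maximal, the row equation
  \<open>d c(w) = c(parent) + \<Sum> c(children)\<close> cannot hold unless \<open>c(w) = 0\<close>.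
  An explicit solution of \<open>c\<Delta> = \<theta>(d,h+2-n) v\<close> is \<open>f\<^sub>j\<^sub>1 - f\<^sub>j\<^sub>2\<close>, where \<open>f\<^sub>J(u) = \<theta>(d,h+1-|u|)\<close>
  on the subtree below \<open>J\<close> and \<open>0\<close> elsewhere; this rests on the recursion
  \<open>\<theta>(d,m+1) = (d-1)\<theta>(d,m) + 1\<close>.  By injectivity any solution of \<open>c\<Delta> = k v\<close> is
  \<open>k/\<theta>(d,h+2-n)\<close> times this one, and its value \<open>k \<theta>(d,h+1-n)/\<theta>(d,h+2-n)\<close> at \<open>j\<^sub>1\<close> is an
  integer only if \<open>\<theta>(d,h+2-n)\<close> divides \<open>k\<close>, the two \<open>\<theta>\<close>-values being coprime by the recursion.
\<close>

definition branching :: "nat \<Rightarrow> nat list \<Rightarrow> nat" where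
  "branching d u = (if u = [] then d else d - 1)"

lemma finite_tree_V: "finite (tree_V d h)"
proof (rule finite_subset)
  show "tree_V d h \<subseteq> {xs. set xs \<subseteq> {..<d} \<and> length xs \<le> h}"
    by (force simp: tree_V_def in_set_conv_nth split: if_splits)
  show "finite {xs. set xs \<subseteq> {..<d} \<and> length xs \<le> h}"
    by (rule finite_lists_length_le) simp
qed

lemma Nil_in_tree_V: "[] \<in> tree_V d h"
  by (simp add: tree_V_def)

lemma butlast_in_tree_V: "j \<in> tree_V d h \<Longrightarrow> butlast j \<in> tree_V d h"
  by (auto simp: tree_V_def nth_butlast)

lemma snoc_in_tree_V_iff:
  "j @ [a] \<in> tree_V d h \<longleftrightarrow> j \<in> tree_V d h \<and> length j < h \<and> a < branching d j"
  by (auto simp: tree_V_def branching_def nth_append less_Suc_eq split: if_splits)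

lemma tree_neighbours:
  assumes "j \<in> tree_V d h"
  shows "{i \<in> tree_V d h. tree_adj i j} =
    (if j = [] then {} else {butlast j}) \<union>
    (if length j < h then (\<lambda>a. j @ [a]) ` {..<branching d j} else {})"
    (is "?N = ?P \<union> ?C")
proof (intro equalityI subsetI)
  fix i assume "i \<in> ?N"
  then have i: "i \<in> tree_V d h" and "tree_adj i j" by auto
  then consider "j \<noteq> []" "i = butlast j" | "i = j @ [last i]"
    by (metis append_butlast_last_id tree_adj_def)
  then show "i \<in> ?P \<union> ?C"
  proof cases
    case 2
    then show ?thesis using i snoc_in_tree_V_iff[of j "last i"] by auto
  qed simp
next
  fix i assume "i \<in> ?P \<union> ?C"
  then show "i \<in> ?N"
    using assms butlast_in_tree_V snoc_in_tree_V_iff[of j _ d h]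
    by (auto simp: tree_adj_def split: if_splits)
qed

definition row_comb :: "nat \<Rightarrow> nat \<Rightarrow> (nat list \<Rightarrow> int) \<Rightarrow> nat list \<Rightarrow> int" where
  "row_comb d h c j = (\<Sum>i\<in>tree_V d h. c i * tree_Delta d i j)"

lemma row_comb_eq:
  assumes "j \<in> tree_V d h"
  shows "row_comb d h c j = int d * c j - (if j = [] then 0 else c (butlast j))
      - (if length j < h then (\<Sum>a<branching d j. c (j @ [a])) else 0)"
proof -
  let ?V = "tree_V d h"
  have "row_comb d h c j =
      (\<Sum>i\<in>?V. c i * (if i = j then int d else 0)) - (\<Sum>i\<in>?V. if tree_adj i j then c i else 0)"
    unfolding row_comb_def tree_Delta_def right_diff_distrib sum_subtractf
    by (simp add: if_distrib cong: if_cong)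
  also have "(\<Sum>i\<in>?V. c i * (if i = j then int d else 0)) = int d * c j"
    using assms finite_tree_V by (simp add: if_distrib cong: if_cong)
  also have "(\<Sum>i\<in>?V. if tree_adj i j then c i else 0) = (\<Sum>i\<in>{i \<in> ?V. tree_adj i j}. c i)"
    using finite_tree_V by (simp add: sum.inter_filter)
  also have "\<dots> = (\<Sum>i\<in>(if j = [] then {} else {butlast j}). c i) +
      (\<Sum>i\<in>(if length j < h then (\<lambda>a. j @ [a]) ` {..<branching d j} else {}). c i)"
    unfolding tree_neighbours[OF assms]
    by (rule sum.union_disjoint) (auto dest: arg_cong[of _ _ length])
  finally show ?thesis
    by (simp add: sum.reindex inj_on_def)
qed

lemma row_comb_diff:
  "row_comb d h (\<lambda>i. c i - c' i) j = row_comb d h c j - row_comb d h c' j"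
  by (simp add: row_comb_def left_diff_distrib sum_subtractf)

lemma row_comb_scale:
  "row_comb d h (\<lambda>i. a * c i) j = a * row_comb d h c j"
  by (simp add: row_comb_def sum_distrib_left mult.assoc)

lemma in_tree_lattice_iff:
  assumes "\<And>j. j \<notin> tree_V d h \<Longrightarrow> w j = 0"
  shows "w \<in> tree_lattice d h \<longleftrightarrow> (\<exists>c. \<forall>j\<in>tree_V d h. row_comb d h c j = w j)"
  using assms by (auto simp: tree_lattice_def row_comb_def fun_eq_iff) metis+

lemma row_comb_zero_at_maximum:
  assumes d: "d \<ge> 2" and w: "w \<in> tree_V d h" and zero: "row_comb d h c w = 0"
    and max: "\<And>u. u \<in> tree_V d h \<Longrightarrow> \<bar>c u\<bar> \<le> \<bar>c w\<bar>"
    and children: "\<And>a. length w < h \<Longrightarrow> a < branching d w \<Longrightarrow> \<bar>c (w @ [a])\<bar> < \<bar>c w\<bar>"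
  shows "c w = 0"
proof (rule ccontr)
  assume "c w \<noteq> 0"
  define M where "M = \<bar>c w\<bar>"
  have M: "M \<ge> 1" using \<open>c w \<noteq> 0\<close> by (simp add: M_def)
  define P where "P = (if w = [] then 0 else c (butlast w))"
  define C where "C = (if length w < h then (\<Sum>a<branching d w. c (w @ [a])) else 0)"
  have "int d * c w = P + C"
    using zero row_comb_eq[OF w, of c] by (simp add: P_def C_def)
  then have sum: "int d * M \<le> \<bar>P\<bar> + \<bar>C\<bar>"
    by (metis M_def abs_mult abs_of_nat abs_triangle_ineq)
  have P: "\<bar>P\<bar> \<le> (if w = [] then 0 else M)"
    using max butlast_in_tree_V[OF w] by (simp add: P_def M_def)
  have C: "\<bar>C\<bar> \<le> (if length w < h then int (branching d w) * (M - 1) else 0)"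
  proof (cases "length w < h")
    case True
    then have "\<bar>\<Sum>a<branching d w. c (w @ [a])\<bar> \<le> (\<Sum>a<branching d w. M - 1)"
      by (intro order_trans[OF sum_abs sum_mono]) (use children in \<open>simp add: M_def\<close>)
    then show ?thesis by (simp add: C_def)
  qed (simp add: C_def)
  have bound: "int d * M \<le> (if w = [] then 0 else M)
      + (if length w < h then int (branching d w) * (M - 1) else 0)"
    using add_mono[OF P C] sum by linarith
  have dM: "2 * M \<le> int d * M" using d M by (intro mult_right_mono) auto
  show False
  proof (cases "length w < h")
    case True
    have "(int d - 1) * (M - 1) = int d * M - M - (int d - 1)"
      by (simp add: algebra_simps)
    then show False
      using bound True d M by (simp add: branching_def of_nat_diff right_diff_distrib split: if_splits)
  next
    case False
    then have "int d * M \<le> (if w = [] then 0 else M)" using bound by simp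
    also have "\<dots> \<le> M" using M by simp
    finally show False using dM M by linarith
  qed
qed

lemma row_comb_eq_0_imp_eq_0:
  assumes d: "d \<ge> 2" and zero: "\<forall>j\<in>tree_V d h. row_comb d h c j = 0" and u: "u \<in> tree_V d h"
  shows "c u = 0"
proof -
  let ?V = "tree_V d h"
  define M where "M = Max ((\<lambda>w. \<bar>c w\<bar>) ` ?V)"
  have le_M: "\<bar>c w\<bar> \<le> M" if "w \<in> ?V" for w
    using that finite_tree_V by (simp add: M_def)
  define A where "A = {w \<in> ?V. \<bar>c w\<bar> = M}"
  have "M \<in> (\<lambda>w. \<bar>c w\<bar>) ` ?V"
    unfolding M_def using finite_tree_V Nil_in_tree_V[of d h] by (intro Max_in) auto
  then have "finite A" "A \<noteq> {}"
    using finite_tree_V by (auto simp: A_def)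
  then have "Max (length ` A) \<in> length ` A" by (intro Max_in) auto
  then obtain w where "w \<in> A" and "length w = Max (length ` A)" by auto
  with \<open>finite A\<close> have deepest: "\<And>x. x \<in> A \<Longrightarrow> length x \<le> length w" by simp
  from \<open>w \<in> A\<close> have w: "w \<in> ?V" "\<bar>c w\<bar> = M" by (auto simp: A_def)
  have "c w = 0"
  proof (rule row_comb_zero_at_maximum[OF d w(1)])
    show "row_comb d h c w = 0" using zero w by simp
    show "\<bar>c v\<bar> \<le> \<bar>c w\<bar>" if "v \<in> ?V" for v
      using le_M[OF that] w by simp
    fix a assume "length w < h" "a < branching d w"
    then have "w @ [a] \<in> ?V" "w @ [a] \<notin> A"
      using w snoc_in_tree_V_iff deepest[of "w @ [a]"] by auto
    then show "\<bar>c (w @ [a])\<bar> < \<bar>c w\<bar>"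
      using le_M w by (fastforce simp: A_def)
  qed
  then show ?thesis using le_M[OF u] w by simp
qed

lemma row_comb_inj_on_tree_V:
  assumes "d \<ge> 2" and "\<forall>j\<in>tree_V d h. row_comb d h c j = row_comb d h c' j"
    and "u \<in> tree_V d h"
  shows "c u = c' u"
  using row_comb_eq_0_imp_eq_0[of d h "\<lambda>i. c i - c' i" u] assms
  unfolding row_comb_diff by simp

lemma theta_eq_sum:
  assumes "d \<ge> 3"
  shows "theta d k = (\<Sum>i<k. (d - 1) ^ i)"
proof -
  define e where "e = d - 2"
  have d: "d - 1 = e + 1" "d - 2 = e" "e > 0" using assms by (simp_all add: e_def)
  have "(e + 1) ^ k = e * (\<Sum>i<k. (e + 1) ^ i) + 1"
    by (induction k) (simp_all add: algebra_simps)
  then show ?thesis using d by (simp add: theta_def)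
qed

lemma theta_Suc:
  assumes "d \<ge> 3"
  shows "theta d (Suc k) = (d - 1) * theta d k + 1"
  unfolding theta_eq_sum[OF assms] sum.lessThan_Suc_shift by (simp add: sum_distrib_left)

lemma coprime_theta_Suc:
  assumes "d \<ge> 3"
  shows "coprime (theta d (Suc k)) (theta d k)"
  unfolding theta_Suc[OF assms] coprime_iff_gcd_eq_1
  by (metis gcd.commute gcd_add_mult gcd_1_nat)

lemma int_theta_Suc:
  assumes "d \<ge> 3"
  shows "int (theta d (Suc k)) = (int d - 1) * int (theta d k) + 1"
  using assms by (simp add: theta_Suc of_nat_diff)

lemma int_theta_Suc_Suc:
  assumes "d \<ge> 3"
  shows "int (theta d (Suc (Suc k))) = int d * int (theta d (Suc k)) - (int d - 1) * int (theta d k)"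
  unfolding int_theta_Suc[OF assms, of "Suc k"] int_theta_Suc[OF assms, of k] by (simp add: algebra_simps)

definition subtree_theta :: "nat \<Rightarrow> nat \<Rightarrow> nat list \<Rightarrow> nat list \<Rightarrow> int" where
  "subtree_theta d h J u = (if prefix J u then int (theta d (h + 1 - length u)) else 0)"

lemma row_comb_subtree_theta_inside:
  assumes d: "d \<ge> 3" and J: "J \<noteq> []" and j: "j \<in> tree_V d h" and "prefix J j"
  shows "row_comb d h (subtree_theta d h J) j =
    (if j = J then int (theta d (h + 2 - length J)) else 0)"
proof -
  define k where "k = h - length j"
  have "j \<noteq> []" using J \<open>prefix J j\<close> by auto
  then have "0 < length j" by simp
  have "length j \<le> h" using j by (simp add: tree_V_def)
  then have self: "subtree_theta d h J j = int (theta d (Suc k))"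
    using \<open>prefix J j\<close> by (simp add: subtree_theta_def k_def Suc_diff_le)
  have children: "(if length j < h then (\<Sum>a<branching d j. subtree_theta d h J (j @ [a])) else 0)
      = (int d - 1) * int (theta d k)"
    \<comment> \<open>at a leaf \<open>k = 0\<close>, and \<open>\<theta>(d,0) = 0\<close> makes both sides vanish\<close>
    using \<open>prefix J j\<close> \<open>j \<noteq> []\<close> d
    by (simp add: subtree_theta_def k_def branching_def of_nat_diff theta_def)
  have parent: "subtree_theta d h J (butlast j) = (if j = J then 0 else int (theta d (Suc (Suc k))))"
  proof (cases "j = J")
    case True
    then show ?thesis
      using J prefix_length_le[of J "butlast J"] by (cases J) (auto simp: subtree_theta_def)
  next
    case False
    have "prefix J (butlast j)"
      using \<open>prefix J j\<close> False prefix_snoc[of J "butlast j" "last j"] \<open>j \<noteq> []\<close> by simp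
    moreover have "h + 1 - length (butlast j) = Suc (Suc k)"
      unfolding k_def length_butlast using \<open>0 < length j\<close> \<open>length j \<le> h\<close> by arith
    ultimately show ?thesis
      using False by (simp add: subtree_theta_def)
  qed
  have "h + 2 - length J = Suc (Suc k)" if "j = J"
    using that \<open>length j \<le> h\<close> by (simp add: k_def)
  then show ?thesis
    unfolding row_comb_eq[OF j] self children parent
    using \<open>j \<noteq> []\<close> int_theta_Suc_Suc[OF d, of k] by simp
qed

lemma row_comb_subtree_theta_outside:
  assumes J: "J \<in> tree_V d h" "J \<noteq> []" and j: "j \<in> tree_V d h" and "\<not> prefix J j"
  shows "row_comb d h (subtree_theta d h J) j =
    (if j = butlast J then - int (theta d (h + 1 - length J)) else 0)"
proof -
  have self: "subtree_theta d h J j = 0"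
    using \<open>\<not> prefix J j\<close> by (simp add: subtree_theta_def)
  have parent: "subtree_theta d h J (butlast j) = 0"
    using \<open>\<not> prefix J j\<close> prefixeq_butlast[of j] prefix_order.trans
    by (auto simp: subtree_theta_def)
  have child: "subtree_theta d h J (j @ [a]) =
      (if a = last J \<and> j = butlast J then int (theta d (h + 1 - length J)) else 0)" for a
    using \<open>\<not> prefix J j\<close> J(2) by (auto simp: subtree_theta_def)
  have children: "(if length j < h then (\<Sum>a<branching d j. subtree_theta d h J (j @ [a])) else 0)
      = (if j = butlast J then int (theta d (h + 1 - length J)) else 0)"
  proof (cases "j = butlast J")
    case True
    then have "length j < h \<and> last J < branching d j"
      using J snoc_in_tree_V_iff[of j "last J" d h] by simp
    then show ?thesis unfolding child using True by simp
  qed (simp add: child)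
  show ?thesis
    unfolding row_comb_eq[OF j] self parent children by simp
qed

lemma row_comb_subtree_theta:
  assumes d: "d \<ge> 3" and J: "J \<in> tree_V d h" "J \<noteq> []" and j: "j \<in> tree_V d h"
  shows "row_comb d h (subtree_theta d h J) j =
    (if j = J then int (theta d (h + 2 - length J)) else 0)
      - (if j = butlast J then int (theta d (h + 1 - length J)) else 0)"
proof (cases "prefix J j")
  case True
  moreover have "j \<noteq> butlast J" using True J(2) prefix_length_le[of J j] by (cases J) auto
  ultimately show ?thesis using row_comb_subtree_theta_inside[OF d J(2) j] by simp
next
  case False
  then show ?thesis using row_comb_subtree_theta_outside[OF J j] by auto
qed

lemma order_in_G_eqI:
  assumes "0 < T" and "(\<lambda>j. int T * v j) \<in> tree_lattice d h"
    and "\<And>k. (\<lambda>j. int k * v j) \<in> tree_lattice d h \<Longrightarrow> T dvd k"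
  shows "order_in_G d h v = T"
proof -
  have "(LEAST k. 0 < k \<and> (\<lambda>j. int k * v j) \<in> tree_lattice d h) = T"
    by (rule Least_equality) (use assms in \<open>auto dest: dvd_imp_le\<close>)
  then show ?thesis using assms(1,2) by (auto simp: order_in_G_def)
qed

lemma dvd_if_multiple_in_tree_lattice:
  assumes d: "d \<ge> 2" and u: "u \<in> tree_V d h"
    and y: "\<forall>j\<in>tree_V d h. row_comb d h y j = int T * v j"
    and coprime: "coprime (int T) (y u)"
    and off_V: "\<And>j. j \<notin> tree_V d h \<Longrightarrow> v j = 0"
    and k: "(\<lambda>j. int k * v j) \<in> tree_lattice d h"
  shows "T dvd k"
proof -
  obtain c where c: "\<forall>j\<in>tree_V d h. row_comb d h c j = int k * v j"
    using k in_tree_lattice_iff[of d h "\<lambda>j. int k * v j"] off_V by auto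
  have "int T * c u = int k * y u"
    using row_comb_inj_on_tree_V[OF d _ u, of "\<lambda>i. int T * c i" "\<lambda>i. int k * y i"] c y
    by (simp add: row_comb_scale)
  then have "int T dvd int k * y u" by (metis dvd_triv_left)
  then have "int T dvd int k" using coprime by (simp add: coprime_dvd_mult_left_iff)
  then show ?thesis by simp
qed

lemma row_comb_siblings:
  assumes d: "d \<ge> 3" and "1 \<le> n"
    and j1: "j1 \<in> tree_V d h" "length j1 = n" and j2: "j2 \<in> tree_V d h" "length j2 = n"
    and siblings: "butlast j1 = butlast j2" "j1 \<noteq> j2" and j: "j \<in> tree_V d h"
  shows "row_comb d h (\<lambda>u. subtree_theta d h j1 u - subtree_theta d h j2 u) j =
    int (theta d (h + 2 - n)) * (std_basis j1 j - std_basis j2 j)"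
proof -
  have nonempty: "j1 \<noteq> []" "j2 \<noteq> []" using \<open>1 \<le> n\<close> j1(2) j2(2) by auto
  have "length (butlast j2) < length j1" "length (butlast j2) < length j2"
    using \<open>1 \<le> n\<close> j1(2) j2(2) by simp_all
  then have "j1 \<noteq> butlast j2" "j2 \<noteq> butlast j2" by (metis less_irrefl)+
  then show ?thesis
    using row_comb_subtree_theta[OF d j1(1) nonempty(1) j] row_comb_subtree_theta[OF d j2(1) nonempty(2) j]
      j1(2) j2(2) siblings
    by (simp add: row_comb_diff std_basis_def)
qed

theorem proposition7p6:
  fixes d h n :: nat and j1 j2 :: "nat list"
  assumes "d \<ge> 3" and "h \<ge> 1" and "1 \<le> n" and "n \<le> h"
    and "j1 \<in> tree_V d h" and "j2 \<in> tree_V d h"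
    and "length j1 = n" and "length j2 = n"
    and "butlast j1 = butlast j2" and "j1 \<noteq> j2"
  shows "order_in_G d h (\<lambda>j. std_basis j1 j - std_basis j2 j) = theta d (h + 2 - n)"
proof -
  let ?V = "tree_V d h" and ?v = "\<lambda>j. std_basis j1 j - std_basis j2 j"
  define T where "T = theta d (h + 2 - n)"
  define y where "y = (\<lambda>u. subtree_theta d h j1 u - subtree_theta d h j2 u)"
  have T_Suc: "T = theta d (Suc (h + 1 - n))" using assms(4) by (simp add: T_def Suc_diff_le)
  have y: "\<forall>j\<in>?V. row_comb d h y j = int T * ?v j"
    using row_comb_siblings[OF assms(1,3,5,7,6,8-10)] by (simp add: y_def T_def)
  have off_V: "\<And>j. j \<notin> ?V \<Longrightarrow> ?v j = 0"
    using assms(5,6) by (auto simp: std_basis_def)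
  have "\<not> prefix j2 j1" using assms(7,8,10) by (auto simp: prefix_def)
  then have "y j1 = int (theta d (h + 1 - n))"
    using assms(7) by (simp add: y_def subtree_theta_def)
  then have coprime: "coprime (int T) (y j1)"
    using coprime_theta_Suc[OF assms(1)] by (simp add: T_Suc)
  have "(\<lambda>j. int T * ?v j) \<in> tree_lattice d h"
    using in_tree_lattice_iff[of d h "\<lambda>j. int T * ?v j"] off_V y by auto
  moreover have "0 < T" by (simp add: T_Suc theta_Suc[OF assms(1)])
  ultimately show ?thesis
    using dvd_if_multiple_in_tree_lattice[OF _ assms(5) y coprime off_V] assms(1)
    by (intro order_in_G_eqI) (simp_all add: T_def)
qed

end
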